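(* Let $G$ be a fullerene graph, $C$ a longest cycle of $G$, and apply the discharging procedure described in the context. If $f=v_1v_2v_3v_4v_5v_6$ is a white face of $G$ such that the edges $v_3v_4$ and $v_5v_6$ are contained in $C$ and the edge $v_4v_5$ is not contained in $C$, then the final amount of charge of $f$ is $1$ unit.
   Context: A fullerene graph is a cubic, planar, $3$-connected graph embedded in the plane in which every face has size five or six. Fix a longest cycle $C$ of $G$; vertices on $C$ are black, the others white. Every face of $G$ is incident with at most two white vertices. A face incident with exactly two white vertices is called white; a face incident with no white vertex is called black. For a face $f$ with vertices $v_1,\dots,v_k$ in cyclic order, $f_{i,i+1}$ denotes the face other than $f$ containing the edge $v_iv_{i+1}$ (indices modulo $k$). Discharging: each white vertex receives $3$ units of charge and sends $1$ unit to each of its three incident faces (so each face initially has charge equal to its number of incident white vertices). Then charge is redistributed by two rules, where $f_0=v_1\dots v_6$ is a black face of size six and indices are modulo $6$. Rule A: $f_0$ receives $1/2$ unit from $f_{i,i+1}$ if the path $v_{i-1}v_iv_{i+1}v_{i+2}$ is contained in $C$ and the face $f_{i,i+1}$ is white. Rule B: $f_0$ receives $1$ unit from $f_{i,i+1}$ if the edge $v_iv_{i+1}$ is contained in $C$, neither $v_{i-1}v_i$ nor $v_{i+1}v_{i+2}$ is contained in $C$, and the face $f_{i,i+1}$ is white. The final charge of a face is its initial charge plus all charge received minus all charge sent under Rules A and B. *)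

theory Defs
  imports Complex_Main
begin

definition simple_graph :: "'a set \<Rightarrow> 'a set set \<Rightarrow> bool" where
  "simple_graph V E \<longleftrightarrow> finite V \<and>
     (\<forall>e\<in>E. \<exists>u v. u \<in> V \<and> v \<in> V \<and> u \<noteq> v \<and> e = {u, v})"

definition neighbors :: "'a set set \<Rightarrow> 'a \<Rightarrow> 'a set" where
  "neighbors E v = {u. {u, v} \<in> E}"

definition cubic :: "'a set \<Rightarrow> 'a set set \<Rightarrow> bool" where
  "cubic V E \<longleftrightarrow> (\<forall>v\<in>V. card (neighbors E v) = 3)"

definition connected_on :: "'a set set \<Rightarrow> 'a set \<Rightarrow> bool" where
  "connected_on E S \<longleftrightarrow> S \<noteq> {} \<and>
     (\<forall>u\<in>S. \<forall>v\<in>S. (\<lambda>x y. x \<in> S \<and> y \<in> S \<and> {x, y} \<in> E)\<^sup>*\<^sup>* u v)"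

definition three_connected :: "'a set \<Rightarrow> 'a set set \<Rightarrow> bool" where
  "three_connected V E \<longleftrightarrow> card V \<ge> 4 \<and>
     (\<forall>S \<subseteq> V. card S \<le> 2 \<longrightarrow> connected_on E (V - S))"

definition cyc_edges :: "'a list \<Rightarrow> 'a set set" where
  "cyc_edges xs = {{xs ! i, xs ! ((i + 1) mod length xs)} | i. i < length xs}"

definition is_cycle :: "'a set set \<Rightarrow> 'a list \<Rightarrow> bool" where
  "is_cycle E xs \<longleftrightarrow> distinct xs \<and> length xs \<ge> 3 \<and> cyc_edges xs \<subseteq> E"

definition longest_cycle :: "'a set set \<Rightarrow> 'a list \<Rightarrow> bool" where
  "longest_cycle E xs \<longleftrightarrow> is_cycle E xs \<and> (\<forall>ys. is_cycle E ys \<longrightarrow> length ys \<le> length xs)"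

text \<open>Faces are indexed by elements of Fs; bd f is the boundary of face f, listed in cyclic order.
  The embedding in the plane (sphere) is given combinatorially: every face boundary is a cycle
  of G, every edge lies on exactly two faces, and Euler's formula V - E + F = 2 holds
  (together with connectivity this characterizes a cellular embedding in the sphere).\<close>
definition fullerene :: "'a set \<Rightarrow> 'a set set \<Rightarrow> 'f set \<Rightarrow> ('f \<Rightarrow> 'a list) \<Rightarrow> bool" where
  "fullerene V E Fs bd \<longleftrightarrow>
     simple_graph V E \<and> cubic V E \<and> three_connected V E \<and> finite Fs \<and>
     (\<forall>f\<in>Fs. is_cycle E (bd f) \<and> length (bd f) \<in> {5, 6}) \<and>
     (\<forall>e\<in>E. card {f \<in> Fs. e \<in> cyc_edges (bd f)} = 2) \<and>
     int (card V) - int (card E) + int (card Fs) = 2"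

definition cyclic_order :: "'a list \<Rightarrow> 'a list \<Rightarrow> bool" where
  "cyclic_order xs ys \<longleftrightarrow> (\<exists>n. ys = rotate n xs \<or> ys = rotate n (rev xs))"

definition white_verts :: "'a list \<Rightarrow> 'a list \<Rightarrow> 'a set" where
  "white_verts C vs = {v \<in> set vs. v \<notin> set C}"

definition white_face :: "'a list \<Rightarrow> ('f \<Rightarrow> 'a list) \<Rightarrow> 'f \<Rightarrow> bool" where
  "white_face C bd f \<longleftrightarrow> card (white_verts C (bd f)) = 2"

definition black_face :: "'a list \<Rightarrow> ('f \<Rightarrow> 'a list) \<Rightarrow> 'f \<Rightarrow> bool" where
  "black_face C bd f \<longleftrightarrow> white_verts C (bd f) = {}"

definition face_edge :: "('f \<Rightarrow> 'a list) \<Rightarrow> 'f \<Rightarrow> nat \<Rightarrow> 'a set" where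
  "face_edge bd f j = {bd f ! (j mod length (bd f)), bd f ! ((j + 1) mod length (bd f))}"

definition other_face :: "'f set \<Rightarrow> ('f \<Rightarrow> 'a list) \<Rightarrow> 'f \<Rightarrow> 'a set \<Rightarrow> 'f" where
  "other_face Fs bd f e = (THE g. g \<in> Fs \<and> g \<noteq> f \<and> e \<in> cyc_edges (bd g))"

definition initial_charge :: "'a list \<Rightarrow> ('f \<Rightarrow> 'a list) \<Rightarrow> 'f \<Rightarrow> real" where
  "initial_charge C bd f = real (card (white_verts C (bd f)))"

text \<open>Amount received by the face g (playing the role of f0 = v_1...v_6, here 0-indexed)
  across its i-th edge v_i v_(i+1) from the face on the other side, by Rule A or Rule B.
  The predecessor index i-1 is (i+5) mod 6.\<close>
definition transfer :: "'f set \<Rightarrow> ('f \<Rightarrow> 'a list) \<Rightarrow> 'a list \<Rightarrow> 'f \<Rightarrow> nat \<Rightarrow> real" where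
  "transfer Fs bd C g i =
     (if length (bd g) = 6 \<and> black_face C bd g
         \<and> white_face C bd (other_face Fs bd g (face_edge bd g i)) then
        (if face_edge bd g (i + 5) \<in> cyc_edges C \<and> face_edge bd g i \<in> cyc_edges C
            \<and> face_edge bd g (i + 1) \<in> cyc_edges C then 1/2
         else if face_edge bd g i \<in> cyc_edges C \<and> face_edge bd g (i + 5) \<notin> cyc_edges C
            \<and> face_edge bd g (i + 1) \<notin> cyc_edges C then 1
         else 0)
      else 0)"

definition final_charge :: "'f set \<Rightarrow> ('f \<Rightarrow> 'a list) \<Rightarrow> 'a list \<Rightarrow> 'f \<Rightarrow> real" where
  "final_charge Fs bd C f =
     initial_charge C bd f
     + (\<Sum>i<length (bd f). transfer Fs bd C f i)
     - (\<Sum>g\<in>Fs. \<Sum>i<length (bd g).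
          if other_face Fs bd g (face_edge bd g i) = f then transfer Fs bd C g i else 0)"

end

theory Submission
  imports Defs
begin

text \<open>The white vertices of f are v1 and v2, so f is not black and receives nothing, and its
  initial charge is 2. Charge only crosses edges of C, and the only edges of f on C are v3 v4
  and v5 v6. The core of the proof is that the face g across v3 v4 (and symmetrically across
  v5 v6) is a black hexagon whose two edges meeting v3 v4 lie on C, so by Rule A f pays 1/2
  across each of these two edges and ends with 2 - 1 = 1.

  To see this, write C = v3 v4 y ... v5 v6 ... x. Because v3 v2 v1 v6 is a path off C, any
  configuration that lets C be rerouted through v1, v2 and vertices off C contradicts
  maximality. Cubicity forces g to contain v3 x and v4 y, so g = v3 v4 y ... x; a pentagon
  v3 v4 y t x, or a hexagon v3 v4 y s t x with s or t off C, would give such a rerouting.\<close>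

section \<open>Paths and cycles as vertex lists\<close>

fun path_edges :: "'a list \<Rightarrow> 'a set set" where
  "path_edges (a # b # xs) = insert {a, b} (path_edges (b # xs))"
| "path_edges _ = {}"

lemma path_edges_iff_nth:
  "e \<in> path_edges xs \<longleftrightarrow> (\<exists>i. Suc i < length xs \<and> e = {xs ! i, xs ! Suc i})"
proof (induction xs rule: path_edges.induct)
  case (1 a b xs)
  have "(\<exists>i. Suc i < length (a # b # xs) \<and> e = {(a # b # xs) ! i, (a # b # xs) ! Suc i}) \<longleftrightarrow>
        e = {a, b} \<or> (\<exists>i. Suc i < length (b # xs) \<and> e = {(b # xs) ! i, (b # xs) ! Suc i})"
    by (auto simp: less_Suc_eq_0_disj)
  with "1.IH" show ?case by simp
qed simp_all

lemma path_edges_Cons: "path_edges (a # xs) = path_edges xs \<union> (if xs = [] then {} else {{a, hd xs}})"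
  by (cases xs) auto

lemma path_edges_append:
  "path_edges (xs @ ys) = path_edges xs \<union> path_edges ys \<union>
     (if xs = [] \<or> ys = [] then {} else {{last xs, hd ys}})"
  by (induction xs rule: path_edges.induct) (auto simp: path_edges_Cons)

lemma path_edges_rev: "path_edges (rev xs) = path_edges xs"
  by (induction xs) (auto simp: path_edges_append path_edges_Cons hd_rev last_rev insert_commute)

lemma path_edges_subset_set: "e \<in> path_edges xs \<Longrightarrow> e \<subseteq> set xs"
  by (induction xs rule: path_edges.induct) auto

lemma path_edges_infix: "path_edges ys \<subseteq> path_edges (xs @ ys @ zs)"
  by (auto simp: path_edges_append)

lemmas path_edges_simps = path_edges_Cons path_edges_append path_edges_rev
  hd_append last_append hd_rev last_rev

lemma cyc_edges_eq_path_edges: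
  assumes "xs \<noteq> []"
  shows "cyc_edges xs = insert {last xs, hd xs} (path_edges xs)"
proof -
  let ?ys = "xs @ [hd xs]"
  have pair: "{xs ! i, xs ! ((i + 1) mod length xs)} = {?ys ! i, ?ys ! Suc i}" if "i < length xs" for i
    using that assms by (cases "Suc i = length xs") (auto simp: nth_append hd_conv_nth)
  have "cyc_edges xs = path_edges ?ys"
  proof (rule set_eqI)
    fix e
    have "e \<in> cyc_edges xs \<longleftrightarrow> (\<exists>i<length xs. e = {?ys ! i, ?ys ! Suc i})"
      unfolding cyc_edges_def using pair by blast
    then show "e \<in> cyc_edges xs \<longleftrightarrow> e \<in> path_edges ?ys"
      by (simp add: path_edges_iff_nth)
  qed
  then show ?thesis using assms by (simp add: path_edges_append insert_commute)
qed

lemma finite_cyc_edges: "finite (cyc_edges xs)"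
  unfolding cyc_edges_def by simp

lemma cyc_edges_subset_set: "e \<in> cyc_edges xs \<Longrightarrow> e \<subseteq> set xs"
  unfolding cyc_edges_def by (fastforce intro!: nth_mem mod_less_divisor)

lemma cyc_edges_rotate1: "cyc_edges (rotate1 xs) = cyc_edges xs"
proof (cases xs)
  case (Cons a ys)
  then show ?thesis
    by (cases ys) (auto simp: cyc_edges_eq_path_edges path_edges_append path_edges_Cons insert_commute)
qed simp

lemma cyc_edges_rotate: "cyc_edges (rotate n xs) = cyc_edges xs"
  by (induction n) (simp_all add: cyc_edges_rotate1)

lemma cyc_edges_rev: "cyc_edges (rev xs) = cyc_edges xs"
  by (cases "xs = []") (simp_all add: cyc_edges_eq_path_edges path_edges_rev hd_rev last_rev insert_commute)

lemma cyclic_orderD: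
  assumes "cyclic_order xs ys"
  shows "cyc_edges xs = cyc_edges ys" "set xs = set ys" "distinct xs \<longleftrightarrow> distinct ys"
  using assms unfolding cyclic_order_def by (auto simp: cyc_edges_rotate cyc_edges_rev)

lemma cyc_edges_rotate_append: "cyc_edges (u @ a # w) = cyc_edges (a # w @ u)"
  using cyc_edges_rotate[of "length u" "u @ a # w"] by (simp add: rotate_append)

lemma cyc_edges_Cons:
  "R \<noteq> [] \<Longrightarrow> cyc_edges (a # R) = insert {a, hd R} (insert {a, last R} (path_edges R))"
  by (simp add: cyc_edges_eq_path_edges path_edges_Cons insert_commute)

lemma cyc_edges_split:
  assumes "w @ u \<noteq> []"
  shows "cyc_edges (u @ a # w) = insert {a, hd (w @ u)} (insert {a, last (w @ u)} (path_edges (w @ u)))"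
  using cyc_edges_Cons[OF assms] by (simp add: cyc_edges_rotate_append)

lemma cycle_neighbour_cases:
  assumes "distinct (u @ a # w)" "w @ u \<noteq> []" "{a, b} \<in> cyc_edges (u @ a # w)"
  shows "b = hd (w @ u) \<or> b = last (w @ u)"
proof -
  have "a \<notin> set (w @ u)" using assms(1) by auto
  then have "{a, b} \<notin> path_edges (w @ u)" using path_edges_subset_set by blast
  then show ?thesis using assms(3) cyc_edges_split[OF assms(2)] by (auto simp: doubleton_eq_iff)
qed

lemma distinct_hd_neq_last: "distinct xs \<Longrightarrow> 2 \<le> length xs \<Longrightarrow> hd xs \<noteq> last xs"
proof (cases xs)
  case (Cons a ys)
  moreover assume "distinct xs" "2 \<le> length xs"
  ultimately show ?thesis using last_in_set[of ys] by auto
qed simp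

lemma cycle_two_neighbours:
  assumes "distinct xs" "length xs \<ge> 3" "a \<in> set xs"
  obtains p q where "p \<noteq> q" "{a, p} \<in> cyc_edges xs" "{a, q} \<in> cyc_edges xs"
    "\<And>b. {a, b} \<in> cyc_edges xs \<Longrightarrow> b = p \<or> b = q"
proof -
  obtain u w where xs: "xs = u @ a # w" using assms(3) by (meson split_list)
  then have ne: "w @ u \<noteq> []" and "hd (w @ u) \<noteq> last (w @ u)"
    using assms(1,2) distinct_hd_neq_last[of "w @ u"] by auto
  with that show ?thesis
    using cycle_neighbour_cases[of u a w] cyc_edges_split[OF ne] assms(1) xs by auto
qed

lemma cycle_starting_with_edge:
  assumes "distinct xs" "length xs \<ge> 3" "{a, b} \<in> cyc_edges xs"
  obtains R where "cyc_edges (a # b # R) = cyc_edges xs" "set (a # b # R) = set xs"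
    "distinct (a # b # R)" "length (a # b # R) = length xs"
proof -
  have "a \<in> set xs" using assms(3) cyc_edges_subset_set by blast
  then obtain u w where xs: "xs = u @ a # w" by (meson split_list)
  define R where "R = w @ u"
  have ne: "R \<noteq> []" using assms(2) xs R_def by auto
  have a_R: "cyc_edges (a # R) = cyc_edges xs" "set (a # R) = set xs"
    "distinct (a # R)" "length (a # R) = length xs"
    using xs assms(1) R_def cyc_edges_rotate_append[of u a w] by auto
  have "b = hd R \<or> b = last R"
    using cycle_neighbour_cases[of u a w b] assms xs ne R_def by blast
  then show ?thesis
  proof
    assume "b = hd R"
    then show ?thesis using that a_R ne by (metis list.collapse)
  next
    assume "b = last R"
    then obtain R' where R': "R = R' @ [b]" using ne by (metis append_butlast_last_id)
    have "a # b # rev R' = rotate (Suc (length R')) (rev (a # R))"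
      using R' by (simp add: rotate_append[of "b # rev R'" "[a]", simplified])
    then have "cyc_edges (a # b # rev R') = cyc_edges xs"
      by (metis a_R(1) cyc_edges_rev cyc_edges_rotate)
    then show ?thesis using that a_R R' by auto
  qed
qed

lemma cycle_starting_with_path:
  assumes "distinct L" "length L \<ge> 3" "{a, b} \<in> cyc_edges L" "{b, c} \<in> cyc_edges L"
    "{a, d} \<in> cyc_edges L" "c \<noteq> a" "d \<noteq> b"
  obtains R where "cyc_edges (a # b # R) = cyc_edges L" "set (a # b # R) = set L"
    "distinct (a # b # R)" "length (a # b # R) = length L" "hd R = c" "last R = d"
proof -
  obtain R where R: "cyc_edges (a # b # R) = cyc_edges L" "set (a # b # R) = set L"
    "distinct (a # b # R)" "length (a # b # R) = length L"
    using cycle_starting_with_edge[OF assms(1-3)] by blast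
  have "R \<noteq> []" using R(4) assms(2) by auto
  moreover have "c = hd (R @ [a]) \<or> c = a"
    using cycle_neighbour_cases[of "[a]" b R c] assms(4) R(1,3) by simp
  moreover have "d = b \<or> d = last (b # R)"
    using cycle_neighbour_cases[of "[]" a "b # R" d] assms(5) R(1,3) by simp
  ultimately show ?thesis using that R assms(6,7) by simp
qed

lemma is_cycle_iff_path_edges:
  "xs \<noteq> [] \<Longrightarrow> is_cycle E xs \<longleftrightarrow>
     distinct xs \<and> 3 \<le> length xs \<and> path_edges xs \<subseteq> E \<and> {last xs, hd xs} \<in> E"
  by (auto simp: is_cycle_def cyc_edges_eq_path_edges)

lemma longest_cycleD:
  assumes "longest_cycle E D"
  shows "distinct D" "3 \<le> length D" "path_edges D \<subseteq> E" "{last D, hd D} \<in> E"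
proof -
  have "is_cycle E D" using assms unfolding longest_cycle_def by blast
  moreover have "D \<noteq> []" using calculation unfolding is_cycle_def by auto
  ultimately show "distinct D" "3 \<le> length D" "path_edges D \<subseteq> E" "{last D, hd D} \<in> E"
    using is_cycle_iff_path_edges by blast+
qed

lemma longest_cycle_no_longer:
  assumes "longest_cycle E D" "distinct N" "length D < length N"
    "path_edges N \<subseteq> E" "{last N, hd N} \<in> E"
  shows False
proof -
  have "N \<noteq> []" "3 \<le> length N" using assms(3) longest_cycleD(2)[OF assms(1)] by auto
  then have "is_cycle E N" using assms(2,4,5) is_cycle_iff_path_edges by blast
  then show False using assms(1,3) unfolding longest_cycle_def by fastforce
qed

lemma neighbors_iff: "u \<in> neighbors E v \<longleftrightarrow> {v, u} \<in> E"
  by (simp add: neighbors_def insert_commute)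

lemma neighbors_eq_three:
  assumes "card (neighbors E v) = 3" "{v, a} \<in> E" "{v, b} \<in> E" "{v, c} \<in> E"
    "a \<noteq> b" "a \<noteq> c" "b \<noteq> c"
  shows "neighbors E v = {a, b, c}"
proof -
  have "{a, b, c} \<subseteq> neighbors E v" using assms(2-4) by (simp add: neighbors_iff)
  moreover have "finite (neighbors E v)" using assms(1) by (metis card.infinite zero_neq_numeral)
  moreover have "card {a, b, c} = 3" using assms(5-7) by simp
  ultimately show ?thesis using assms(1) by (metis card_subset_eq)
qed

lemma cycle_uses_one_of_two_edges:
  assumes "is_cycle E D" "t \<in> set D" "card (neighbors E t) = 3"
    "{t, a} \<in> E" "{t, b} \<in> E" "a \<noteq> b"
  shows "{t, a} \<in> cyc_edges D \<or> {t, b} \<in> cyc_edges D"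
proof (rule ccontr)
  assume off: "\<not> ?thesis"
  have D: "distinct D" "length D \<ge> 3" "cyc_edges D \<subseteq> E" using assms(1) unfolding is_cycle_def by auto
  obtain p q where pq: "p \<noteq> q" "{t, p} \<in> cyc_edges D" "{t, q} \<in> cyc_edges D"
    using cycle_two_neighbours[OF D(1,2) assms(2)] by blast
  have "{p, q, a, b} \<subseteq> neighbors E t"
    using pq(2,3) D(3) assms(4,5) by (auto simp: neighbors_iff)
  moreover have "finite (neighbors E t)" using assms(3) by (metis card.infinite zero_neq_numeral)
  ultimately have "card {p, q, a, b} \<le> 3" using assms(3) card_mono by metis
  moreover have "p \<noteq> a" "p \<noteq> b" "q \<noteq> a" "q \<noteq> b" using pq off by auto
  ultimately show False using pq(1) assms(6) by simp
qed

section \<open>Faces of a fullerene\<close>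

lemma fullerene_face:
  "fullerene V E Fs bd \<Longrightarrow> h \<in> Fs \<Longrightarrow> is_cycle E (bd h) \<and> length (bd h) \<in> {5, 6}"
  by (simp add: fullerene_def)

lemma fullerene_edge_faces:
  "fullerene V E Fs bd \<Longrightarrow> e \<in> E \<Longrightarrow> card {h \<in> Fs. e \<in> cyc_edges (bd h)} = 2"
  by (simp add: fullerene_def)

lemma fullerene_face_edge_in_E:
  "fullerene V E Fs bd \<Longrightarrow> h \<in> Fs \<Longrightarrow> e \<in> cyc_edges (bd h) \<Longrightarrow> e \<in> E"
  using fullerene_face unfolding is_cycle_def by (metis subsetD)

lemma fullerene_degree:
  assumes "fullerene V E Fs bd" "{u, w} \<in> E"
  shows "card (neighbors E u) = 3"
proof -
  have "simple_graph V E" "cubic V E" using assms(1) unfolding fullerene_def by auto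
  then obtain a b where "a \<in> V" "b \<in> V" "{u, w} = {a, b}"
    using assms(2) unfolding simple_graph_def by blast
  then have "u \<in> V" by (auto simp: doubleton_eq_iff)
  then show ?thesis using \<open>cubic V E\<close> unfolding cubic_def by blast
qed

lemma fullerene_face_vertex_degree:
  assumes "fullerene V E Fs bd" "h \<in> Fs" "u \<in> set (bd h)"
  shows "card (neighbors E u) = 3"
proof -
  have "distinct (bd h)" "length (bd h) \<ge> 3"
    using fullerene_face[OF assms(1,2)] unfolding is_cycle_def by auto
  then obtain p where "{u, p} \<in> cyc_edges (bd h)" using cycle_two_neighbours assms(3) by metis
  then show ?thesis using fullerene_degree[OF assms(1)] fullerene_face_edge_in_E[OF assms(1,2)] by blast
qed

lemma fullerene_edge_on_other_face:
  assumes "fullerene V E Fs bd" "f \<in> Fs" "e \<in> cyc_edges (bd f)"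
  obtains g where "g \<in> Fs" "g \<noteq> f" "e \<in> cyc_edges (bd g)"
    "\<And>h. h \<in> Fs \<Longrightarrow> e \<in> cyc_edges (bd h) \<Longrightarrow> h = f \<or> h = g"
proof -
  have "e \<in> E" using fullerene_face_edge_in_E[OF assms] .
  then have "card {h \<in> Fs. e \<in> cyc_edges (bd h)} = 2" by (rule fullerene_edge_faces[OF assms(1)])
  then obtain g g' where gg': "g \<noteq> g'" "{h \<in> Fs. e \<in> cyc_edges (bd h)} = {g, g'}"
    by (auto simp: card_2_iff)
  then have "f = g \<or> f = g'" using assms(2,3) by blast
  then show ?thesis
  proof
    assume "f = g"
    then show ?thesis using that[of g'] gg' by blast
  next
    assume "f = g'"
    then show ?thesis using that[of g] gg' by blast
  qed
qed

lemma fullerene_at_most_two_faces: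
  assumes "fullerene V E Fs bd" "f \<in> Fs" "g \<in> Fs" "k \<in> Fs" "f \<noteq> g"
    "e \<in> cyc_edges (bd f)" "e \<in> cyc_edges (bd g)" "e \<in> cyc_edges (bd k)"
  shows "k = f \<or> k = g"
proof -
  obtain g0 where "g0 \<noteq> f" "\<And>h. h \<in> Fs \<Longrightarrow> e \<in> cyc_edges (bd h) \<Longrightarrow> h = f \<or> h = g0"
    using fullerene_edge_on_other_face[OF assms(1,2,6)] by blast
  then show ?thesis using assms(3-5,7,8) by metis
qed

lemma face_uses_two_edges_at_vertex:
  assumes "fullerene V E Fs bd" "h \<in> Fs" "neighbors E v = {a, b, c}"
    "a \<noteq> b" "a \<noteq> c" "b \<noteq> c" "{v, a} \<in> cyc_edges (bd h)"
  shows "{v, b} \<in> cyc_edges (bd h) \<longleftrightarrow> {v, c} \<notin> cyc_edges (bd h)"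
proof -
  have h: "distinct (bd h)" "length (bd h) \<ge> 3"
    using fullerene_face[OF assms(1,2)] unfolding is_cycle_def by auto
  have "v \<in> set (bd h)" using assms(7) cyc_edges_subset_set by blast
  then obtain p q where pq: "p \<noteq> q" "{v, p} \<in> cyc_edges (bd h)" "{v, q} \<in> cyc_edges (bd h)"
    "\<And>u. {v, u} \<in> cyc_edges (bd h) \<Longrightarrow> u = p \<or> u = q"
    using cycle_two_neighbours[OF h] by blast
  have "{v, p} \<in> E" "{v, q} \<in> E" using pq(2,3) fullerene_face_edge_in_E[OF assms(1,2)] by blast+
  then have "p \<in> {a, b, c}" "q \<in> {a, b, c}" unfolding assms(3)[symmetric] neighbors_iff .
  then show ?thesis using pq assms(4-7) by blast
qed

text \<open>Each of the three faces at a cubic vertex v uses two of its three edges, so the face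
  across vb from the face through va and vb is the one through vb and vc.\<close>
lemma face_across_edge_at_vertex:
  assumes full: "fullerene V E Fs bd" and "f \<in> Fs" "g \<in> Fs" "f \<noteq> g"
    and nb: "neighbors E v = {a, b, c}" "a \<noteq> b" "a \<noteq> c" "b \<noteq> c"
    and fa: "{v, a} \<in> cyc_edges (bd f)" and fb: "{v, b} \<in> cyc_edges (bd f)"
    and gb: "{v, b} \<in> cyc_edges (bd g)"
  shows "{v, c} \<in> cyc_edges (bd g)"
proof (rule ccontr)
  assume gc: "{v, c} \<notin> cyc_edges (bd g)"
  have fc: "{v, c} \<notin> cyc_edges (bd f)"
    using face_uses_two_edges_at_vertex[OF full \<open>f \<in> Fs\<close> nb fa] fb by blast
  have ga: "{v, a} \<in> cyc_edges (bd g)"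
    using face_uses_two_edges_at_vertex[OF full \<open>g \<in> Fs\<close>, of v b a c] nb gb gc
    by (auto simp: insert_commute)
  have "{v, c} \<in> E" using nb by (simp add: neighbors_iff[symmetric])
  then have "{h \<in> Fs. {v, c} \<in> cyc_edges (bd h)} \<noteq> {}"
    using fullerene_edge_faces[OF full] by (metis card.empty zero_neq_numeral)
  then obtain k where k: "k \<in> Fs" "{v, c} \<in> cyc_edges (bd k)" by blast
  then have "k \<noteq> f" "k \<noteq> g" using fc gc by auto
  moreover have "{v, a} \<in> cyc_edges (bd k) \<or> {v, b} \<in> cyc_edges (bd k)"
    using face_uses_two_edges_at_vertex[OF full k(1), of v c a b] nb k(2) by (auto simp: insert_commute)
  ultimately show False
    using fullerene_at_most_two_faces[OF full] assms(2-4) k(1) fa fb ga gb by blast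
qed

lemma face_across_corner:
  assumes full: "fullerene V E Fs bd" and faces: "f \<in> Fs" "g \<in> Fs" "f \<noteq> g"
    and f: "{v2, v3} \<in> cyc_edges (bd f)" "{v3, v4} \<in> cyc_edges (bd f)" "{v4, v5} \<in> cyc_edges (bd f)"
    and g: "{v3, v4} \<in> cyc_edges (bd g)"
    and nb: "neighbors E v3 = {v2, v4, x}" "neighbors E v4 = {v5, v3, y}"
    and dist: "distinct [v2, v3, v4, v5, x, y]"
  obtains R where "cyc_edges (v3 # v4 # R) = cyc_edges (bd g)" "set (v3 # v4 # R) = set (bd g)"
    "distinct (v3 # v4 # R)" "length (v3 # v4 # R) = length (bd g)" "hd R = y" "last R = x"
proof -
  have g_x: "{v3, x} \<in> cyc_edges (bd g)"
    by (rule face_across_edge_at_vertex[OF full faces nb(1)])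
      (use dist f g in \<open>auto simp: insert_commute\<close>)
  have g_y: "{v4, y} \<in> cyc_edges (bd g)"
    by (rule face_across_edge_at_vertex[OF full faces nb(2)])
      (use dist f g in \<open>auto simp: insert_commute\<close>)
  have "distinct (bd g)" "length (bd g) \<ge> 3" "y \<noteq> v3" "x \<noteq> v4"
    using fullerene_face[OF full faces(2)] dist unfolding is_cycle_def by auto
  then show ?thesis using cycle_starting_with_path[of "bd g" v3 v4 y x] that g g_x g_y by blast
qed

section \<open>Rerouting a longest cycle through a white path\<close>

text \<open>Below, v3 v2 v1 v6 is a path off the longest cycle D (through the white vertices of a
  face v1 ... v6), and each forbidden configuration yields a longer cycle through v1 and v2.\<close>
lemma longest_cycle_bypass_order:
  assumes "longest_cycle E D" "D = v3 # v4 # P @ [v6, v5] @ W"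
    "v1 \<notin> set D" "v2 \<notin> set D" "v1 \<noteq> v2"
    "{v1, v2} \<in> E" "{v2, v3} \<in> E" "{v4, v5} \<in> E" "{v6, v1} \<in> E"
  shows False
  using longest_cycle_no_longer[OF assms(1), of "v4 # P @ [v6, v1, v2, v3] @ rev W @ [v5]"]
    longest_cycleD[OF assms(1)] assms(2-)
  by (simp add: path_edges_simps insert_commute split: if_splits)

lemma longest_cycle_bypass_gap:
  assumes "longest_cycle E D" "D = v3 # v4 # P @ [v5, v6]"
    "v1 \<notin> set D" "v2 \<notin> set D" "v1 \<noteq> v2"
    "{v1, v2} \<in> E" "{v2, v3} \<in> E" "{v4, v5} \<in> E" "{v6, v1} \<in> E"
  shows False
  using longest_cycle_no_longer[OF assms(1), of "[v3, v2, v1, v6, v5] @ rev P @ [v4]"]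
    longest_cycleD[OF assms(1)] assms(2-)
  by (simp add: path_edges_simps insert_commute split: if_splits)

lemma longest_cycle_bypass_normal_form:
  assumes lc: "longest_cycle E C" and C: "{v3, v4} \<in> cyc_edges C" "{v5, v6} \<in> cyc_edges C"
    "{v4, v5} \<notin> cyc_edges C" "v1 \<notin> set C" "v2 \<notin> set C"
    and dist: "distinct [v1, v2, v3, v4, v5, v6]"
    and bypass: "{v1, v2} \<in> E" "{v2, v3} \<in> E" "{v4, v5} \<in> E" "{v6, v1} \<in> E"
  obtains y P Q x D where "longest_cycle E D" "cyc_edges D = cyc_edges C" "set D = set C"
    "D = v3 # v4 # y # P @ [v5, v6] @ Q @ [x]"
proof -
  have "is_cycle E C" using lc unfolding longest_cycle_def by blast
  then obtain R where R: "cyc_edges (v3 # v4 # R) = cyc_edges C" "set (v3 # v4 # R) = set C"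
    "distinct (v3 # v4 # R)" "length (v3 # v4 # R) = length C"
    using cycle_starting_with_edge C(1) unfolding is_cycle_def by metis
  define D where "D = v3 # v4 # R"
  have lcD: "longest_cycle E D"
    using lc R unfolding D_def longest_cycle_def is_cycle_def by auto
  have "v5 \<in> set R" using C(2) R(2) dist cyc_edges_subset_set by fastforce
  then obtain P W where PW: "R = P @ v5 # W" by (meson split_list)
  have "{v5, v6} \<in> cyc_edges ((v3 # v4 # P) @ v5 # W)" using C(2) R(1) PW by simp
  then have "v6 = hd (W @ v3 # v4 # P) \<or> v6 = last (W @ v3 # v4 # P)"
    using cycle_neighbour_cases[of "v3 # v4 # P" v5 W v6] R(3) PW by simp
  then obtain Q where DQ: "D = v3 # v4 # P @ [v5, v6] @ Q"
  proof
    assume "v6 = hd (W @ v3 # v4 # P)"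
    then show ?thesis using that dist PW unfolding D_def by (cases W) auto
  next
    assume "v6 = last (W @ v3 # v4 # P)"
    then obtain P' where "P = P' @ [v6]" using dist by (cases P rule: rev_cases) auto
    then have "D = v3 # v4 # P' @ [v6, v5] @ W" using PW D_def by simp
    then show ?thesis
      using longest_cycle_bypass_order[OF lcD _ _ _ _ bypass] C(4,5) R(2) dist D_def by auto
  qed
  have "P \<noteq> []"
  proof
    assume "P = []"
    then have "{v4, v5} \<in> cyc_edges D" using DQ by (simp add: cyc_edges_eq_path_edges)
    then show False using C(3) R(1) D_def by simp
  qed
  moreover have "Q \<noteq> []"
    using longest_cycle_bypass_gap[OF lcD _ _ _ _ bypass] DQ C(4,5) R(2) dist D_def by auto
  ultimately obtain y P1 Q1 x where "P = y # P1" "Q = Q1 @ [x]"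
    by (metis neq_Nil_conv rev_exhaust)
  with that show ?thesis using lcD R DQ D_def by simp
qed

text \<open>D is the longest cycle C read from its edge v3 v4; the white path v3 v2 v1 v6 lies off D.\<close>
locale longest_cycle_bypass =
  fixes E :: "'a set set" and D P Q :: "'a list" and v1 v2 v3 v4 v5 v6 x y :: 'a
  assumes longest: "longest_cycle E D"
    and D_eq: "D = v3 # v4 # y # P @ [v5, v6] @ Q @ [x]"
    and off_D: "v1 \<notin> set D" "v2 \<notin> set D" "v1 \<noteq> v2"
    and bypass: "{v1, v2} \<in> E" "{v2, v3} \<in> E" "{v4, v5} \<in> E" "{v6, v1} \<in> E"
begin

lemma D_facts:
  "distinct D" "path_edges D \<subseteq> E" "{x, v3} \<in> E" "{v3, v4} \<in> E" "{v4, y} \<in> E" "is_cycle E D"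
  using longest_cycleD[OF longest] D_eq longest unfolding longest_cycle_def by simp_all

text \<open>The cycle A2 v4 v3 v2 v1 B1 Z trades the arcs A1 and B2 of D for v1, v2 and the
  detour Z.\<close>
lemma no_detour:
  assumes A: "y # P @ [v5] = A1 @ A2" "A2 \<noteq> []"
    and B: "v6 # Q @ [x] = B1 @ B2" "B1 \<noteq> []"
    and Z: "distinct Z" "set Z \<inter> set D = {}" "v1 \<notin> set Z" "v2 \<notin> set Z"
      "path_edges (last B1 # Z @ [hd A2]) \<subseteq> E"
    and short: "length A1 + length B2 < length Z + 2"
  shows False
proof -
  let ?N = "A2 @ [v4, v3, v2, v1] @ B1 @ Z"
  have D': "D = v3 # v4 # A1 @ A2 @ B1 @ B2" using D_eq A(1) B(1) by simp
  have ends: "last A2 = v5" "hd B1 = v6"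
    using arg_cong[OF A(1), of last] arg_cong[OF B(1), of hd] A(2) B(2) by simp_all
  have arcs: "path_edges A2 \<subseteq> E" "path_edges B1 \<subseteq> E"
    using D_facts(2) D' path_edges_infix[of A2 "v3 # v4 # A1" "B1 @ B2"]
      path_edges_infix[of B1 "v3 # v4 # A1 @ A2" B2] by auto
  have "distinct ?N" using D_facts(1) D' Z off_D by auto
  moreover have "length D < length ?N" using D' short by simp
  moreover have "path_edges ?N \<subseteq> E \<and> {last ?N, hd ?N} \<in> E"
    using arcs ends Z(5) A(2) B(2) bypass D_facts(4)
    by (cases Z) (auto simp: path_edges_simps insert_commute split: if_splits)
  ultimately show False using longest_cycle_no_longer[OF longest] by blast
qed

lemma ends_not_adjacent_to_bypass: "{x, v1} \<notin> E" "{x, v2} \<notin> E" "{y, v1} \<notin> E" "{y, v2} \<notin> E"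
proof -
  note facts = D_facts D_eq off_D bypass
  show "{x, v1} \<notin> E"
  proof
    assume "{x, v1} \<in> E"
    then show False
      using longest_cycle_no_longer[OF longest, of "v4 # y # P @ [v5, v6] @ Q @ [x, v1, v2, v3]"] facts
      by (simp add: path_edges_simps insert_commute split: if_splits)
  qed
  show "{x, v2} \<notin> E"
  proof
    assume "{x, v2} \<in> E"
    then show False
      using longest_cycle_no_longer[OF longest, of "v4 # y # P @ [v5, v6] @ Q @ [x, v2, v3]"] facts
      by (simp add: path_edges_simps insert_commute split: if_splits)
  qed
  show "{y, v1} \<notin> E"
  proof
    assume "{y, v1} \<in> E"
    then show False
      using longest_cycle_no_longer[OF longest, of "y # P @ [v5, v4, v3] @ rev (Q @ [x]) @ [v6, v1]"] facts
      by (simp add: path_edges_simps insert_commute split: if_splits)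
  qed
  show "{y, v2} \<notin> E"
  proof
    assume "{y, v2} \<in> E"
    then show False
      using longest_cycle_no_longer[OF longest, of "y # P @ [v5, v4, v3] @ rev (Q @ [x]) @ [v6, v1, v2]"]
        facts
      by (simp add: path_edges_simps insert_commute split: if_splits)
  qed
qed

lemma cycle_successor_of_y:
  assumes "{y, t} \<in> cyc_edges D" "t \<noteq> v4"
  shows "t = hd (P @ [v5])"
proof -
  have "D = [v3, v4] @ y # (P @ [v5, v6] @ Q @ [x])" using D_eq by simp
  then have "t = hd (P @ [v5, v6] @ Q @ [x] @ [v3, v4]) \<or> t = v4"
    using cycle_neighbour_cases[of "[v3, v4]" y "P @ [v5, v6] @ Q @ [x]" t] assms(1) D_facts(1) by simp
  then show ?thesis using assms(2) by (cases P) auto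
qed

lemma cycle_predecessor_of_x:
  assumes "{x, t} \<in> cyc_edges D" "t \<noteq> v3"
  shows "t = last (v6 # Q)"
proof -
  have "D = (v3 # v4 # y # P @ [v5, v6] @ Q) @ [x]" using D_eq by simp
  then have "t = v3 \<or> t = last (v3 # v4 # y # P @ [v5, v6] @ Q)"
    using cycle_neighbour_cases[of "v3 # v4 # y # P @ [v5, v6] @ Q" x "[]" t] assms(1) D_facts(1) by simp
  then show ?thesis using assms(2) by (cases Q rule: rev_cases) auto
qed

lemma no_corner_pentagon:
  assumes "{y, t} \<in> E" "{t, x} \<in> E" "distinct [v3, v4, y, t, x]" "card (neighbors E t) = 3"
  shows False
proof (cases "t \<in> set D")
  case False
  moreover have "t \<noteq> v1" "t \<noteq> v2" using ends_not_adjacent_to_bypass(1,2) assms(2) by (auto simp: insert_commute)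
  ultimately show False
    using no_detour[of "[]" "y # P @ [v5]" "v6 # Q @ [x]" "[]" "[t]"] assms(1,2) by (simp add: insert_commute)
next
  case True
  have "{t, y} \<in> E" using assms(1) by (simp add: insert_commute)
  then have "{t, y} \<in> cyc_edges D \<or> {t, x} \<in> cyc_edges D"
    using cycle_uses_one_of_two_edges[OF D_facts(6) True assms(4) _ assms(2)] assms(3) by simp
  then show False
  proof
    assume "{t, y} \<in> cyc_edges D"
    then have "t = hd (P @ [v5])" using cycle_successor_of_y[of t] assms(3) by (auto simp: insert_commute)
    then show False
      using no_detour[of "[y]" "P @ [v5]" "v6 # Q @ [x]" "[]" "[]"] assms(2) by (simp add: insert_commute)
  next
    assume "{t, x} \<in> cyc_edges D"
    then have "t = last (v6 # Q)" using cycle_predecessor_of_x[of t] assms(3) by (auto simp: insert_commute)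
    then show False
      using no_detour[of "[]" "y # P @ [v5]" "v6 # Q" "[x]" "[]"] assms(1) by (simp add: insert_commute)
  qed
qed

lemma corner_hexagon_on_cycle:
  assumes "{y, s} \<in> E" "{s, t} \<in> E" "{t, x} \<in> E" "distinct [v3, v4, y, s, t, x]"
    "card (neighbors E s) = 3" "card (neighbors E t) = 3"
  shows "s \<in> set D" "t \<in> set D"
proof -
  have white: "s \<noteq> v1" "s \<noteq> v2" "t \<noteq> v1" "t \<noteq> v2"
    using ends_not_adjacent_to_bypass assms(1,3) by (auto simp: insert_commute)
  have "s \<in> set D \<and> t \<in> set D"
  proof (rule ccontr)
    assume "\<not> (s \<in> set D \<and> t \<in> set D)"
    then consider "s \<notin> set D" "t \<notin> set D" | "s \<notin> set D" "t \<in> set D" | "s \<in> set D" "t \<notin> set D"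
      by blast
    then show False
    proof cases
      case 1
      then show False using no_detour[of "[]" "y # P @ [v5]" "v6 # Q @ [x]" "[]" "[t, s]"]
          assms(1-4) white by (auto simp: insert_commute)
    next
      case 2
      then have "{t, x} \<in> cyc_edges D"
        using cycle_uses_one_of_two_edges[OF D_facts(6) _ assms(6), of x s] assms(2-4)
          cyc_edges_subset_set by (fastforce simp: insert_commute)
      then have "t = last (v6 # Q)" using cycle_predecessor_of_x[of t] assms(4) by (auto simp: insert_commute)
      then show False using no_detour[of "[]" "y # P @ [v5]" "v6 # Q" "[x]" "[s]"]
          2 assms(1,2,4) white by (simp add: insert_commute)
    next
      case 3
      then have "{s, y} \<in> cyc_edges D"
        using cycle_uses_one_of_two_edges[OF D_facts(6) _ assms(5), of y t] assms(1,2,4)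
          cyc_edges_subset_set by (fastforce simp: insert_commute)
      then have "s = hd (P @ [v5])" using cycle_successor_of_y[of s] assms(4) by (auto simp: insert_commute)
      then show False using no_detour[of "[y]" "P @ [v5]" "v6 # Q @ [x]" "[]" "[t]"]
          3 assms(2,3,4) white by (simp add: insert_commute)
    qed
  qed
  then show "s \<in> set D" "t \<in> set D" by blast+
qed

lemma corner_face_shape:
  assumes "distinct (v3 # v4 # R)" "path_edges R \<subseteq> E" "hd R = y" "last R = x"
    "length R \<in> {3, 4}" "\<forall>u\<in>set R. card (neighbors E u) = 3"
  obtains s t where "R = [y, s, t, x]" "s \<in> set D" "t \<in> set D"
proof (cases "length R = 3")
  case True
  then obtain t where "R = [y, t, x]" using assms(3,4) by (auto simp: numeral_3_eq_3 length_Suc_conv)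
  then show ?thesis using no_corner_pentagon[of t] assms(1,2,6) by simp
next
  case False
  then obtain s t where R: "R = [y, s, t, x]"
    using assms(3-5) by (auto simp: numeral_eq_Suc length_Suc_conv)
  then show ?thesis using that corner_hexagon_on_cycle[of s t] assms(1,2,6) by simp
qed

end

section \<open>The discharging rules\<close>

definition rule_A_hexagon :: "'a list \<Rightarrow> ('f \<Rightarrow> 'a list) \<Rightarrow> 'f \<Rightarrow> 'a set \<Rightarrow> bool" where
  "rule_A_hexagon C bd g e \<longleftrightarrow> length (bd g) = 6 \<and> set (bd g) \<subseteq> set C \<and>
     (\<forall>e'\<in>cyc_edges (bd g). e' \<noteq> e \<and> e' \<inter> e \<noteq> {} \<longrightarrow> e' \<in> cyc_edges C)"

lemma rule_A_hexagonI:
  assumes "cyc_edges (bd g) = cyc_edges [a, b, c, d, e, f]" "distinct [a, b, c, d, e, f]"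
    "length (bd g) = 6" "set (bd g) \<subseteq> set C" "{b, c} \<in> cyc_edges C" "{f, a} \<in> cyc_edges C"
  shows "rule_A_hexagon C bd g {a, b}"
  using assms unfolding rule_A_hexagon_def by (auto simp: cyc_edges_eq_path_edges insert_commute)

lemma hexagon_across_C_edge:
  assumes full: "fullerene V E Fs bd" and lc: "longest_cycle E C"
    and faces: "f \<in> Fs" "g \<in> Fs" "g \<noteq> f"
    and f6: "cyc_edges (bd f) = cyc_edges [v1, v2, v3, v4, v5, v6]" "distinct [v1, v2, v3, v4, v5, v6]"
    and C: "{v3, v4} \<in> cyc_edges C" "{v5, v6} \<in> cyc_edges C" "{v4, v5} \<notin> cyc_edges C"
      "v1 \<notin> set C" "v2 \<notin> set C"
    and g34: "{v3, v4} \<in> cyc_edges (bd g)"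
  shows "rule_A_hexagon C bd g {v3, v4}"
proof -
  have f_edges: "{v1, v2} \<in> cyc_edges (bd f)" "{v2, v3} \<in> cyc_edges (bd f)"
    "{v3, v4} \<in> cyc_edges (bd f)" "{v4, v5} \<in> cyc_edges (bd f)" "{v6, v1} \<in> cyc_edges (bd f)"
    using f6(1) by (simp_all add: cyc_edges_eq_path_edges)
  then have fE: "{v1, v2} \<in> E" "{v2, v3} \<in> E" "{v3, v4} \<in> E" "{v4, v5} \<in> E" "{v6, v1} \<in> E"
    using fullerene_face_edge_in_E[OF full faces(1)] by blast+
  obtain y P Q x D where D: "longest_cycle E D" "cyc_edges D = cyc_edges C" "set D = set C"
    "D = v3 # v4 # y # P @ [v5, v6] @ Q @ [x]"
    by (rule longest_cycle_bypass_normal_form[OF lc C f6(2) fE(1,2,4,5)])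
  interpret longest_cycle_bypass E D P Q v1 v2 v3 v4 v5 v6 x y
    using D(1,3,4) C(4,5) f6(2) fE by unfold_locales auto
  have dist: "distinct [v2, v3, v4, v5, x, y]" using D(4) D_facts(1) off_D by auto
  have nb3: "neighbors E v3 = {v2, v4, x}"
    by (rule neighbors_eq_three)
      (use fullerene_degree[OF full] fE D_facts(3) dist in \<open>auto simp: insert_commute\<close>)
  have nb4: "neighbors E v4 = {v5, v3, y}"
    by (rule neighbors_eq_three)
      (use fullerene_degree[OF full] fE D_facts(5) dist in \<open>auto simp: insert_commute\<close>)
  obtain R where R: "cyc_edges (v3 # v4 # R) = cyc_edges (bd g)" "set (v3 # v4 # R) = set (bd g)"
    "distinct (v3 # v4 # R)" "length (v3 # v4 # R) = length (bd g)" "hd R = y" "last R = x"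
    using face_across_corner[OF full faces(1,2) faces(3)[symmetric] f_edges(2-4) g34 nb3 nb4 dist] .
  have g_cycle: "is_cycle E (bd g)" "length (bd g) \<in> {5, 6}" using fullerene_face[OF full faces(2)] by auto
  have pe: "path_edges R \<subseteq> E"
    using R(1) g_cycle(1) unfolding is_cycle_def by (auto simp: cyc_edges_Cons path_edges_Cons)
  have len: "length R \<in> {3, 4}" using R(4) g_cycle(2) by auto
  have deg: "\<forall>u\<in>set R. card (neighbors E u) = 3"
    using R(2) fullerene_face_vertex_degree[OF full faces(2)] by auto
  obtain s t where st: "R = [y, s, t, x]" "s \<in> set D" "t \<in> set D"
    using corner_face_shape[OF R(3) pe R(5,6) len deg] by blast
  show ?thesis
  proof (rule rule_A_hexagonI[of bd g v3 v4 y s t x])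
    have "{v4, y} \<in> cyc_edges D" "{x, v3} \<in> cyc_edges D"
      using D(4) by (simp_all add: cyc_edges_eq_path_edges)
    then show "{v4, y} \<in> cyc_edges C" "{x, v3} \<in> cyc_edges C" using D(2) by simp_all
  qed (use R st D(3,4) in auto)
qed

lemma face_edge_eq:
  "i < length (bd g) \<Longrightarrow> face_edge bd g i = {bd g ! i, bd g ! (Suc i mod length (bd g))}"
  unfolding face_edge_def by simp

lemma face_edge_in_cyc_edges:
  assumes "bd g \<noteq> []"
  shows "face_edge bd g j \<in> cyc_edges (bd g)"
proof -
  have "Suc (j mod length (bd g)) mod length (bd g) = Suc j mod length (bd g)" by (simp add: mod_Suc_eq)
  moreover have "j mod length (bd g) < length (bd g)" using assms by simp
  ultimately show ?thesis unfolding face_edge_def cyc_edges_def by fastforce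
qed

lemma face_edge_bij:
  assumes "distinct (bd g)" "3 \<le> length (bd g)"
  shows "bij_betw (face_edge bd g) {..<length (bd g)} (cyc_edges (bd g))"
proof (rule bij_betw_imageI)
  let ?L = "bd g" and ?n = "length (bd g)"
  have nth_eq: "?L ! i = ?L ! j \<longleftrightarrow> i = j" if "i < ?n" "j < ?n" for i j
    using assms(1) that by (simp add: nth_eq_iff_index_eq)
  show "inj_on (face_edge bd g) {..<?n}"
  proof (rule inj_onI)
    fix i j assume ij: "i \<in> {..<?n}" "j \<in> {..<?n}" "face_edge bd g i = face_edge bd g j"
    then have "{?L ! i, ?L ! (Suc i mod ?n)} = {?L ! j, ?L ! (Suc j mod ?n)}"
      by (simp add: face_edge_eq)
    moreover have "0 < ?n" using assms(2) by linarith
    then have "Suc i mod ?n < ?n" "Suc j mod ?n < ?n" by simp_all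
    ultimately have "i = j \<or> (i = Suc j mod ?n \<and> j = Suc i mod ?n)"
      using ij(1,2) nth_eq by (auto simp: doubleton_eq_iff)
    then show "i = j" using ij(1,2) assms(2) by (auto simp: mod_Suc split: if_splits)
  qed
  show "face_edge bd g ` {..<?n} = cyc_edges (bd g)"
    unfolding cyc_edges_def by (auto simp: face_edge_eq)
qed

lemma other_face_iff:
  assumes "fullerene V E Fs bd" "g \<in> Fs" "e \<in> cyc_edges (bd g)" "f \<in> Fs"
  shows "other_face Fs bd g e = f \<longleftrightarrow> f \<noteq> g \<and> e \<in> cyc_edges (bd f)"
proof -
  obtain h where h: "h \<in> Fs" "h \<noteq> g" "e \<in> cyc_edges (bd h)"
    "\<And>k. k \<in> Fs \<Longrightarrow> e \<in> cyc_edges (bd k) \<Longrightarrow> k = g \<or> k = h"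
    using fullerene_edge_on_other_face[OF assms(1-3)] by blast
  then have "other_face Fs bd g e = h"
    unfolding other_face_def by (intro the_equality) blast+
  then show ?thesis using h assms(4) by blast
qed

lemma transfer_off_C: "face_edge bd g i \<notin> cyc_edges C \<Longrightarrow> transfer Fs bd C g i = 0"
  unfolding transfer_def by simp

lemma transfer_non_black: "\<not> black_face C bd g \<Longrightarrow> transfer Fs bd C g i = 0"
  unfolding transfer_def by simp

lemma transfer_rule_A:
  assumes "rule_A_hexagon C bd g e" "distinct (bd g)" "face_edge bd g i = e" "e \<in> cyc_edges C"
    "white_face C bd (other_face Fs bd g e)"
  shows "transfer Fs bd C g i = 1/2"
proof -
  let ?L = "bd g"
  have L6: "length ?L = 6" and black: "black_face C bd g"
    using assms(1) unfolding rule_A_hexagon_def black_face_def white_verts_def by auto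
  have on_C: "e' \<in> cyc_edges C" if "e' \<in> cyc_edges ?L" "e' \<noteq> e" "e' \<inter> e \<noteq> {}" for e'
    using assms(1) that unfolding rule_A_hexagon_def by blast
  have "?L \<noteq> []" using L6 by auto
  note face_edge_in = face_edge_in_cyc_edges[of bd g, OF this]
  have idx: "(i + 2) mod 6 \<noteq> i mod 6" "(i + 2) mod 6 \<noteq> (i + 1) mod 6"
    "(i + 5) mod 6 \<noteq> i mod 6" "(i + 5) mod 6 \<noteq> (i + 1) mod 6"
    by presburger+
  have e: "e = {?L ! (i mod 6), ?L ! ((i + 1) mod 6)}"
    using assms(3) L6 unfolding face_edge_def by simp
  have "face_edge bd g (i + 1) = {?L ! ((i + 1) mod 6), ?L ! ((i + 2) mod 6)}"
    using L6 unfolding face_edge_def by (simp add: add.assoc)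
  moreover have "?L ! ((i + 2) mod 6) \<notin> e"
    using e idx(1,2) L6 assms(2) by (simp add: nth_eq_iff_index_eq)
  ultimately have "face_edge bd g (i + 1) \<noteq> e" "face_edge bd g (i + 1) \<inter> e \<noteq> {}"
    using e by auto
  then have next_C: "face_edge bd g (i + 1) \<in> cyc_edges C"
    using on_C face_edge_in by blast
  have "face_edge bd g (i + 5) = {?L ! ((i + 5) mod 6), ?L ! (i mod 6)}"
    using L6 unfolding face_edge_def by (simp add: mod_Suc_eq)
  moreover have "?L ! ((i + 5) mod 6) \<notin> e"
    using e idx(3,4) L6 assms(2) by (simp add: nth_eq_iff_index_eq)
  ultimately have "face_edge bd g (i + 5) \<noteq> e" "face_edge bd g (i + 5) \<inter> e \<noteq> {}"
    using e by auto
  then have prev_C: "face_edge bd g (i + 5) \<in> cyc_edges C"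
    using on_C face_edge_in by blast
  show ?thesis using L6 black next_C prev_C assms(3-5) unfolding transfer_def by simp
qed

lemma charge_sent_by_face:
  fixes T :: "'a set \<Rightarrow> real"
  assumes full: "fullerene V E Fs bd" and f: "f \<in> Fs" and g: "g \<in> Fs"
    and T: "\<And>g i. g \<in> Fs \<Longrightarrow> i < length (bd g) \<Longrightarrow> other_face Fs bd g (face_edge bd g i) = f \<Longrightarrow>
      transfer Fs bd C g i = T (face_edge bd g i)"
  shows "(\<Sum>i<length (bd g).
           if other_face Fs bd g (face_edge bd g i) = f then transfer Fs bd C g i else 0)
         = (\<Sum>e\<in>cyc_edges (bd f). if e \<in> cyc_edges (bd g) \<and> g \<noteq> f then T e else 0)"
proof -
  let ?h = "\<lambda>e. if other_face Fs bd g e = f then T e else 0"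
  have "distinct (bd g)" "3 \<le> length (bd g)"
    using fullerene_face[OF full g] unfolding is_cycle_def by auto
  note bij = face_edge_bij[of bd g, OF this]
  have "(\<Sum>i<length (bd g).
      if other_face Fs bd g (face_edge bd g i) = f then transfer Fs bd C g i else 0)
      = (\<Sum>i<length (bd g). ?h (face_edge bd g i))"
    using T[OF g] by (intro sum.cong) auto
  also have "\<dots> = (\<Sum>e\<in>cyc_edges (bd g). ?h e)"
    by (rule sum.reindex_bij_betw[OF bij])
  also have "\<dots> = (\<Sum>e\<in>cyc_edges (bd g). if e \<in> cyc_edges (bd f) then (if g \<noteq> f then T e else 0) else 0)"
    using other_face_iff[OF full g _ f] by (intro sum.cong) auto
  also have "\<dots> = (\<Sum>e\<in>cyc_edges (bd g) \<inter> cyc_edges (bd f). if g \<noteq> f then T e else 0)"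
    by (rule sum.inter_restrict[OF finite_cyc_edges, symmetric])
  also have "\<dots> = (\<Sum>e\<in>cyc_edges (bd f). if e \<in> cyc_edges (bd g) \<and> g \<noteq> f then T e else 0)"
    unfolding Int_commute[of "cyc_edges (bd g)"] sum.inter_restrict[OF finite_cyc_edges]
    by (rule sum.cong) auto
  finally show ?thesis .
qed

lemma sum_faces_sharing_edge:
  assumes full: "fullerene V E Fs bd" and f: "f \<in> Fs" and e: "e \<in> cyc_edges (bd f)"
  shows "(\<Sum>g\<in>Fs. if e \<in> cyc_edges (bd g) \<and> g \<noteq> f then c else 0) = c"
proof -
  obtain g0 where "g0 \<in> Fs" "g0 \<noteq> f" "e \<in> cyc_edges (bd g0)"
    "\<And>h. h \<in> Fs \<Longrightarrow> e \<in> cyc_edges (bd h) \<Longrightarrow> h = f \<or> h = g0"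
    using fullerene_edge_on_other_face[OF full f e] by blast
  then have "{g \<in> Fs. e \<in> cyc_edges (bd g) \<and> g \<noteq> f} = {g0}" by blast
  moreover have "finite Fs" using full unfolding fullerene_def by blast
  ultimately show ?thesis by (simp add: sum.inter_filter[symmetric])
qed

lemma charge_sent_to_face:
  fixes T :: "'a set \<Rightarrow> real"
  assumes full: "fullerene V E Fs bd" and f: "f \<in> Fs"
    and T: "\<And>g i. g \<in> Fs \<Longrightarrow> i < length (bd g) \<Longrightarrow> other_face Fs bd g (face_edge bd g i) = f \<Longrightarrow>
      transfer Fs bd C g i = T (face_edge bd g i)"
  shows "(\<Sum>g\<in>Fs. \<Sum>i<length (bd g).
           if other_face Fs bd g (face_edge bd g i) = f then transfer Fs bd C g i else 0)
         = (\<Sum>e\<in>cyc_edges (bd f). T e)"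
proof -
  let ?across = "\<lambda>g e. if e \<in> cyc_edges (bd g) \<and> g \<noteq> f then T e else 0"
  have "(\<Sum>g\<in>Fs. \<Sum>i<length (bd g).
      if other_face Fs bd g (face_edge bd g i) = f then transfer Fs bd C g i else 0)
      = (\<Sum>g\<in>Fs. \<Sum>e\<in>cyc_edges (bd f). ?across g e)"
    by (rule sum.cong[OF refl]) (erule charge_sent_by_face[OF full f _ T])
  also have "\<dots> = (\<Sum>e\<in>cyc_edges (bd f). \<Sum>g\<in>Fs. ?across g e)"
    by (rule sum.swap)
  also have "\<dots> = (\<Sum>e\<in>cyc_edges (bd f). T e)"
    by (rule sum.cong[OF refl]) (erule sum_faces_sharing_edge[OF full f])
  finally show ?thesis .
qed

lemma white_verts_of_white_face:
  assumes "white_face C bd f" "set (bd f) = {v1, v2, v3, v4, v5, v6}" "v1 \<noteq> v2"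
    "{v3, v4} \<in> cyc_edges C" "{v5, v6} \<in> cyc_edges C"
  shows "white_verts C (bd f) = {v1, v2}"
proof -
  have "{v3, v4, v5, v6} \<subseteq> set C" using assms(4,5) cyc_edges_subset_set by blast
  then have "white_verts C (bd f) \<subseteq> {v1, v2}" using assms(2) unfolding white_verts_def by auto
  moreover have "card (white_verts C (bd f)) = card {v1, v2}"
    using assms(1,3) unfolding white_face_def by simp
  ultimately show ?thesis by (simp add: card_subset_eq)
qed

lemma hexagon_face_edges_on_C:
  assumes "cyc_edges L = cyc_edges [v1, v2, v3, v4, v5, v6]" "v1 \<notin> set C" "v2 \<notin> set C"
    "{v3, v4} \<in> cyc_edges C" "{v5, v6} \<in> cyc_edges C" "{v4, v5} \<notin> cyc_edges C"
  shows "cyc_edges L \<inter> cyc_edges C = {{v3, v4}, {v5, v6}}"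
proof -
  have "cyc_edges L = {{v1, v2}, {v2, v3}, {v3, v4}, {v4, v5}, {v5, v6}, {v6, v1}}"
    using assms(1) by (simp add: cyc_edges_eq_path_edges insert_commute)
  moreover have "e \<notin> cyc_edges C" if "v1 \<in> e \<or> v2 \<in> e" for e
    using that assms(2,3) cyc_edges_subset_set by blast
  ultimately show ?thesis using assms(4-6) by auto
qed

lemma transfer_into_white_face:
  assumes full: "fullerene V E Fs bd" and lc: "longest_cycle E C" and faces: "f \<in> Fs" "g \<in> Fs"
    and f6: "cyc_edges (bd f) = cyc_edges [v1, v2, v3, v4, v5, v6]" "distinct [v1, v2, v3, v4, v5, v6]"
    and C: "{v3, v4} \<in> cyc_edges C" "{v5, v6} \<in> cyc_edges C" "{v4, v5} \<notin> cyc_edges C"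
      "v1 \<notin> set C" "v2 \<notin> set C"
    and white: "white_face C bd f"
    and i: "i < length (bd g)" "other_face Fs bd g (face_edge bd g i) = f"
  shows "transfer Fs bd C g i = (if face_edge bd g i \<in> cyc_edges C then 1/2 else 0)"
proof (cases "face_edge bd g i \<in> cyc_edges C")
  case True
  let ?e = "face_edge bd g i"
  have "bd g \<noteq> []" using i(1) by auto
  then have g: "distinct (bd g)" "?e \<in> cyc_edges (bd g)"
    using fullerene_face[OF full faces(2)] face_edge_in_cyc_edges[of bd g]
    unfolding is_cycle_def by auto
  then have "g \<noteq> f" "?e \<in> cyc_edges (bd f)" using other_face_iff[OF full faces(2) _ faces(1)] i(2) by auto
  then have "?e = {v3, v4} \<or> ?e = {v5, v6}"
    using hexagon_face_edges_on_C[OF f6(1) C(4,5,1-3)] True by blast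
  moreover have "rule_A_hexagon C bd g ?e" if "?e = {v3, v4}"
    using hexagon_across_C_edge[OF full lc faces(1,2) \<open>g \<noteq> f\<close> f6 C] g(2) that by simp
  moreover have "rule_A_hexagon C bd g ?e" if "?e = {v5, v6}"
  proof -
    have "cyc_edges (bd f) = cyc_edges [v2, v1, v6, v5, v4, v3]" "distinct [v2, v1, v6, v5, v4, v3]"
      using f6 by (auto simp: cyc_edges_eq_path_edges insert_commute)
    moreover have "{v6, v5} \<in> cyc_edges C" "{v4, v3} \<in> cyc_edges C" "{v5, v4} \<notin> cyc_edges C"
      using C(1-3) by (simp_all add: insert_commute)
    ultimately show ?thesis
      using hexagon_across_C_edge[OF full lc faces(1,2) \<open>g \<noteq> f\<close>, of v2 v1 v6 v5 v4 v3] C(4,5) g(2) that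
      by (simp add: insert_commute)
  qed
  ultimately have "transfer Fs bd C g i = 1/2"
    using transfer_rule_A[OF _ g(1) refl True] white i(2) by blast
  then show ?thesis using True by simp
qed (simp add: transfer_off_C)

theorem lemma5:
  fixes V :: "'a set" and E :: "'a set set" and Fs :: "'f set" and bd :: "'f \<Rightarrow> 'a list"
    and C :: "'a list" and f :: 'f and v1 v2 v3 v4 v5 v6 :: 'a
  assumes "fullerene V E Fs bd"
    and "longest_cycle E C"
    and "f \<in> Fs"
    and "white_face C bd f"
    and "cyclic_order (bd f) [v1, v2, v3, v4, v5, v6]"
    and "{v3, v4} \<in> cyc_edges C"
    and "{v5, v6} \<in> cyc_edges C"
    and "{v4, v5} \<notin> cyc_edges C"
  shows "final_charge Fs bd C f = 1"
proof -
  note full = assms(1) and f = assms(3) and C = assms(6-8)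
  have "distinct (bd f)" using fullerene_face[OF full f] unfolding is_cycle_def by blast
  then have f6: "cyc_edges (bd f) = cyc_edges [v1, v2, v3, v4, v5, v6]" "distinct [v1, v2, v3, v4, v5, v6]"
    and "set (bd f) = {v1, v2, v3, v4, v5, v6}"
    using cyclic_orderD[OF assms(5)] by auto
  then have "white_verts C (bd f) = {v1, v2}"
    using white_verts_of_white_face[OF assms(4)] C(1,2) by simp
  then have off_C: "v1 \<notin> set C" "v2 \<notin> set C" and "\<not> black_face C bd f"
    unfolding white_verts_def black_face_def by auto
  then have received: "(\<Sum>i<length (bd f). transfer Fs bd C f i) = 0"
    by (simp add: transfer_non_black)
  have "(\<Sum>g\<in>Fs. \<Sum>i<length (bd g).
          if other_face Fs bd g (face_edge bd g i) = f then transfer Fs bd C g i else 0)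
        = (\<Sum>e\<in>cyc_edges (bd f). if e \<in> cyc_edges C then 1/2 else 0)"
    using transfer_into_white_face[OF full assms(2) f _ f6 C off_C assms(4)]
    by (intro charge_sent_to_face[OF full f]) blast
  also have "\<dots> = 1/2 * card (cyc_edges (bd f) \<inter> cyc_edges C)"
    by (simp add: sum.inter_restrict[OF finite_cyc_edges, symmetric])
  also have "\<dots> = 1"
    using hexagon_face_edges_on_C[OF f6(1) off_C C] f6(2) by (simp add: doubleton_eq_iff)
  finally show ?thesis
    using received assms(4) unfolding final_charge_def initial_charge_def white_face_def by simp
qed

end
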